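(* Let ${\rm K}/\mathbb{Q}$ be a finite Galois extension of degree $m$ and let $u\in E_{\rm K}\cap\mathbb{S}$. Then there exist an integer $k\ge1$ and a constant $c>0$ (depending on $u$, $k$ and $m$) such that $|{\rm N}(\Phi_n(u^k))|\ge \exp(cn)$ for every positive integer $n$ with $\varphi(n)\ge \frac12 n$.
   Context: $E_{\rm K}$ is the unit group of $\mathcal{O}_{\rm K}$; ${\rm N}$ is the norm from ${\rm K}$ to $\mathbb{Q}$; $\Phi_n$ is the $n$-th cyclotomic polynomial and $\varphi$ Euler's totient function. $\mathbb{S}$ is the set of algebraic integers none of whose conjugates lies on the complex unit circle. *)

theory Defs
  imports "HOL-Analysis.Analysis" "HOL-Computational_Algebra.Polynomial"
    "HOL-Number_Theory.Number_Theory" "HOL-Library.FuncSet"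
begin

text \<open>Number fields are modelled as subfields of the complex numbers.\<close>

definition subfield_C :: "complex set \<Rightarrow> bool" where
  "subfield_C K \<longleftrightarrow> 0 \<in> K \<and> 1 \<in> K \<and>
     (\<forall>x\<in>K. \<forall>y\<in>K. x + y \<in> K \<and> x * y \<in> K) \<and>
     (\<forall>x\<in>K. - x \<in> K) \<and> (\<forall>x\<in>K. x \<noteq> 0 \<longrightarrow> inverse x \<in> K)"

definition degree_over_Q :: "complex set \<Rightarrow> nat \<Rightarrow> bool" where
  "degree_over_Q K m \<longleftrightarrow> (\<exists>B. finite B \<and> card B = m \<and> B \<subseteq> K \<and>
     (\<forall>c :: complex \<Rightarrow> rat. (\<Sum>b\<in>B. of_rat (c b) * b) = 0 \<longrightarrow> (\<forall>b\<in>B. c b = 0)) \<and>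
     (\<forall>x\<in>K. \<exists>c :: complex \<Rightarrow> rat. x = (\<Sum>b\<in>B. of_rat (c b) * b)))"

definition embeddings :: "complex set \<Rightarrow> (complex \<Rightarrow> complex) set" where
  "embeddings K = {\<sigma> \<in> K \<rightarrow>\<^sub>E UNIV. \<sigma> 1 = 1 \<and>
     (\<forall>x\<in>K. \<forall>y\<in>K. \<sigma> (x + y) = \<sigma> x + \<sigma> y \<and> \<sigma> (x * y) = \<sigma> x * \<sigma> y)}"

text \<open>K/Q finite Galois of degree m (normality: every embedding maps K into K).\<close>
definition galois_number_field :: "complex set \<Rightarrow> nat \<Rightarrow> bool" where
  "galois_number_field K m \<longleftrightarrow> subfield_C K \<and> degree_over_Q K m \<and>
     (\<forall>\<sigma>\<in>embeddings K. \<sigma> ` K \<subseteq> K)"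

definition nf_norm :: "complex set \<Rightarrow> complex \<Rightarrow> complex" where
  "nf_norm K x = (\<Prod>\<sigma>\<in>embeddings K. \<sigma> x)"

definition ring_of_integers :: "complex set \<Rightarrow> complex set" where
  "ring_of_integers K = {x \<in> K. algebraic_int x}"

definition unit_group :: "complex set \<Rightarrow> complex set" where
  "unit_group K = {x \<in> ring_of_integers K. x \<noteq> 0 \<and> inverse x \<in> ring_of_integers K}"

text \<open>Conjugates of x over Q: roots of the minimal polynomial, i.e. common roots of
  all rational polynomials vanishing at x.\<close>
definition conjugates :: "complex \<Rightarrow> complex set" where
  "conjugates x = {z. \<forall>p :: rat poly. poly (map_poly of_rat p) x = 0 \<longrightarrow> poly (map_poly of_rat p) z = 0}"

definition S_set :: "complex set" where
  "S_set = {x. algebraic_int x \<and> (\<forall>z\<in>conjugates x. cmod z \<noteq> 1)}"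

definition cyclotomic :: "nat \<Rightarrow> complex poly" where
  "cyclotomic n = (\<Prod>j\<in>{j\<in>{1..n}. coprime j n}. [:- cis (2 * pi * real j / real n), 1:])"

end

(*
  For an embedding s of K, s(Phi_n(u^k)) = Phi_n(s(u)^k) because Phi_n has rational
  coefficients, and |Phi_n(w)| >= ||w| - 1|^phi(n); hence
    |N(Phi_n(u^k))| >= (prod_s ||s(u)|^k - 1|)^phi(n).
  No |s(u)| equals 1, as s(u) is a conjugate of u.  Some |s(u)| exceeds 1: the minimal polynomial
  of u has integer coefficients and a nonzero constant term, so one of its roots z has |z| > 1,
  and every root of it is s(u) for some embedding s.  For k large the product is then at least 2,
  and the norm is at least 2^phi(n) >= 2^(n/2).

  The embedding with s(u) = z comes from linear algebra on the finite-dimensional complex space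
  of Q-linear functionals l : K -> C.  The operators l |-> l(a * _), a in K, commute, so they have
  a common eigenvector inside the z-eigenspace of l |-> l(u * _); normalised at 1 it is s.
*)

theory Submission
  imports Defs "HOL-Computational_Algebra.Fundamental_Theorem_Algebra" "HOL-Library.Function_Algebras"
begin

section \<open>Polynomials with rational coefficients\<close>

lemma map_poly_of_rat_add:
  "map_poly (of_rat :: rat \<Rightarrow> 'a::field_char_0) (p + q) = map_poly of_rat p + map_poly of_rat q"
  by (rule poly_eqI) (simp add: coeff_map_poly of_rat_add)

lemma map_poly_of_rat_mult:
  "map_poly (of_rat :: rat \<Rightarrow> 'a::field_char_0) (p * q) = map_poly of_rat p * map_poly of_rat q"
  by (rule poly_eqI) (simp add: coeff_map_poly coeff_mult of_rat_sum of_rat_mult)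

lemma map_poly_of_rat_diff:
  "map_poly (of_rat :: rat \<Rightarrow> 'a::field_char_0) (p - q) = map_poly of_rat p - map_poly of_rat q"
  by (rule poly_eqI) (simp add: coeff_map_poly of_rat_diff)

lemma map_poly_of_rat_sum:
  "map_poly (of_rat :: rat \<Rightarrow> 'a::field_char_0) (\<Sum>x\<in>A. f x) = (\<Sum>x\<in>A. map_poly of_rat (f x))"
  by (induction A rule: infinite_finite_induct) (simp_all add: map_poly_of_rat_add)

lemma map_poly_of_rat_prod:
  "map_poly (of_rat :: rat \<Rightarrow> 'a::field_char_0) (\<Prod>x\<in>A. f x) = (\<Prod>x\<in>A. map_poly of_rat (f x))"
  by (induction A rule: infinite_finite_induct) (simp_all add: map_poly_of_rat_mult)

lemma degree_map_poly_of_rat [simp]: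
  "degree (map_poly (of_rat :: rat \<Rightarrow> 'a::field_char_0) p) = degree p"
  by (rule degree_map_poly) simp

lemma map_poly_of_rat_eq_0_iff [simp]:
  "map_poly (of_rat :: rat \<Rightarrow> 'a::field_char_0) p = 0 \<longleftrightarrow> p = 0"
  by (simp add: map_poly_eq_0_iff)

lemma lead_coeff_map_poly_of_rat [simp]:
  "lead_coeff (map_poly (of_rat :: rat \<Rightarrow> 'a::field_char_0) p) = of_rat (lead_coeff p)"
  by (simp add: coeff_map_poly)

lemma map_poly_of_rat_smult [simp]:
  "map_poly (of_rat :: rat \<Rightarrow> 'a::field_char_0) (Polynomial.smult c p) =
     Polynomial.smult (of_rat c) (map_poly of_rat p)"
  by (simp add: map_poly_smult of_rat_mult)

lemma poly_map_poly_of_rat_mult [simp]: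
  "poly (map_poly (of_rat :: rat \<Rightarrow> 'a::field_char_0) (p * q)) x =
     poly (map_poly of_rat p) x * poly (map_poly of_rat q) x"
  by (simp add: map_poly_of_rat_mult)

lemma poly_map_poly_of_rat_add [simp]:
  "poly (map_poly (of_rat :: rat \<Rightarrow> 'a::field_char_0) (p + q)) x =
     poly (map_poly of_rat p) x + poly (map_poly of_rat q) x"
  by (simp add: map_poly_of_rat_add)

text \<open>Compare with division with remainder over \<open>\<rat>\<close>: the remainder has too small a degree
  to be a nonzero multiple of \<open>b\<close>.\<close>

lemma map_poly_of_rat_cofactor:
  fixes a b :: "rat poly" and c :: "'a::field_char_0 poly"
  assumes eq: "map_poly of_rat a = map_poly of_rat b * c" and "b \<noteq> 0"
  shows "c = map_poly of_rat (a div b)"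
proof (rule ccontr)
  let ?d = "c - map_poly of_rat (a div b)"
  assume "c \<noteq> map_poly of_rat (a div b)"
  hence "?d \<noteq> 0" by simp
  have "map_poly of_rat a = map_poly of_rat b * map_poly of_rat (a div b) + map_poly of_rat (a mod b)"
    by (simp flip: map_poly_of_rat_mult map_poly_of_rat_add)
  hence "map_poly of_rat b * ?d = (map_poly of_rat (a mod b) :: 'a poly)"
    using eq by (metis add_diff_cancel_left' right_diff_distrib)
  moreover have "degree (map_poly of_rat b * ?d) = degree b + degree ?d"
    using \<open>?d \<noteq> 0\<close> \<open>b \<noteq> 0\<close> by (simp add: degree_mult_eq)
  moreover have "a mod b = 0 \<or> degree (a mod b) < degree b"
    using degree_mod_less[OF \<open>b \<noteq> 0\<close>] by blast
  ultimately show False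
    using \<open>?d \<noteq> 0\<close> \<open>b \<noteq> 0\<close> by (auto simp: mult_eq_0_iff)
qed

lemma monic_linear_cofactor:
  fixes g :: "'a::idom poly"
  assumes "lead_coeff (g * [:- z, 1:]) = 1"
  shows "lead_coeff g = 1" "degree (g * [:- z, 1:]) = Suc (degree g)"
proof -
  show "lead_coeff g = 1"
    using assms by (simp only: lead_coeff_mult) simp
  hence "g \<noteq> 0"
    by auto
  thus "degree (g * [:- z, 1:]) = Suc (degree g)"
    by (subst degree_mult_eq) auto
qed

section \<open>Cyclotomic polynomials\<close>

lemma cyclotomic_altdef: "cyclotomic n = (\<Prod>j\<in>totatives n. [:- cis (2 * pi * real j / real n), 1:])"
proof -
  have "{j\<in>{1..n}. coprime j n} = totatives n"
    by (auto simp: totatives_def)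
  thus ?thesis
    by (simp add: cyclotomic_def)
qed

lemma lead_coeff_cyclotomic [simp]: "lead_coeff (cyclotomic n) = 1"
  by (simp add: cyclotomic_def lead_coeff_prod)

lemma cyclotomic_neq_0 [simp]: "cyclotomic n \<noteq> 0"
  using lead_coeff_cyclotomic[of n] by (metis leading_coeff_0_iff zero_neq_one)

lemma bij_betw_roots_unity_greaterThanAtMost:
  assumes "n > 0"
  shows "bij_betw (\<lambda>k. cis (2 * pi * real k / real n)) {0<..n} {z. z ^ n = 1}"
proof -
  have "bij_betw (\<lambda>k. k mod n) {0<..n} {..<n}"
    by (rule bij_betw_byWitness[where f' = "\<lambda>k. if k = 0 then n else k"]) (use assms in \<open>auto simp: le_less\<close>)
  hence bij: "bij_betw ((\<lambda>k. cis (2 * pi * real k / real n)) \<circ> (\<lambda>k. k mod n)) {0<..n} {z. z ^ n = 1}"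
    using Complex.bij_betw_roots_unity[OF assms] by (rule bij_betw_trans)
  have eq: "cis (2 * pi * real (k mod n) / real n) = cis (2 * pi * real k / real n)"
    if "k \<in> {0<..n}" for k
  proof (cases "k = n")
    case True
    thus ?thesis
      using assms by (simp add: cis_multiple_2pi[of 1, simplified])
  qed (use that in simp)
  show ?thesis
    using bij by (rule bij_betw_cong[THEN iffD1, rotated]) (simp add: eq)
qed

lemma monom_minus_one_eq_prod_roots_unity:
  assumes "n > 0"
  shows "(Polynomial.monom 1 n - 1 :: complex poly) = (\<Prod>z | z ^ n = 1. [:- z, 1:])"
proof -
  let ?p = "Polynomial.monom 1 n - 1 :: complex poly"
  have roots: "poly ?p z = 0 \<longleftrightarrow> z ^ n = 1" for z
    by (simp add: poly_monom)
  have "degree (Polynomial.monom 1 n + (- 1) :: complex poly) = n"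
    using assms by (subst degree_add_eq_left) (auto simp: degree_monom_eq)
  hence "degree ?p = n"
    by simp
  hence "lead_coeff ?p = 1"
    using assms by simp
  moreover have "rsquarefree ?p"
    unfolding rsquarefree_roots using assms
    by (auto simp: roots pderiv_diff pderiv_monom poly_monom power_0_left split: if_splits)
  ultimately show ?thesis
    using complex_poly_decompose_rsquarefree[of ?p] by (simp add: roots poly_monom)
qed

lemma monom_minus_one_eq_prod_cyclotomic:
  assumes "n > 0"
  shows "(Polynomial.monom 1 n - 1 :: complex poly) = (\<Prod>d | d dvd n. cyclotomic d)"
proof -
  define \<zeta> where "\<zeta> k = cis (2 * pi * real k / real n)" for k
  define A where "A e = {k\<in>{0<..n}. gcd k n = e}" for e
  have "(Polynomial.monom 1 n - 1 :: complex poly) = (\<Prod>z | z ^ n = 1. [:- z, 1:])"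
    by (rule monom_minus_one_eq_prod_roots_unity[OF assms])
  also have "\<dots> = (\<Prod>k\<in>{0<..n}. [:- \<zeta> k, 1:])"
    unfolding \<zeta>_def
    by (rule prod.reindex_bij_betw[symmetric, OF bij_betw_roots_unity_greaterThanAtMost[OF assms]])
  also have "{0<..n} = (\<Union>e\<in>{e. e dvd n}. A e)"
    by (auto simp: A_def)
  also have "(\<Prod>k\<in>\<dots>. [:- \<zeta> k, 1:]) = (\<Prod>e | e dvd n. \<Prod>k\<in>A e. [:- \<zeta> k, 1:])"
    using assms by (intro prod.UNION_disjoint) (auto simp: A_def)
  also have "\<dots> = (\<Prod>e | e dvd n. cyclotomic (n div e))"
  proof (rule prod.cong[OF refl])
    fix e assume "e \<in> {e. e dvd n}"
    then obtain d where n: "n = e * d" by auto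
    have "bij_betw (\<lambda>j. j * e) (totatives d) (A e)"
      using bij_betw_totatives_gcd_eq[of e n] assms n by (simp add: A_def)
    hence "(\<Prod>k\<in>A e. [:- \<zeta> k, 1:]) = (\<Prod>j\<in>totatives d. [:- \<zeta> (j * e), 1:])"
      by (rule prod.reindex_bij_betw[symmetric])
    also have "\<dots> = cyclotomic d"
      using assms n by (simp add: cyclotomic_altdef \<zeta>_def mult.assoc)
    finally show "(\<Prod>k\<in>A e. [:- \<zeta> k, 1:]) = cyclotomic (n div e)"
      using assms n by simp
  qed
  also have "\<dots> = (\<Prod>d | d dvd n. cyclotomic d)"
    using assms by (intro prod.reindex_bij_witness[of _ "(div) n" "(div) n"]) (auto elim: dvdE)
  finally show ?thesis .
qed

lemma cyclotomic_rational: "\<exists>c. cyclotomic n = map_poly of_rat c"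
proof (induction n rule: less_induct)
  case (less n)
  show ?case
  proof (cases "n = 0")
    case True
    thus ?thesis
      by (intro exI[of _ 1]) (simp add: cyclotomic_def)
  next
    case False
    define D where "D = {d. d dvd n} - {n}"
    have "\<forall>d\<in>D. \<exists>c. cyclotomic d = map_poly of_rat c"
      using False by (auto simp: D_def intro!: less.IH dest: dvd_imp_le)
    then obtain c where c: "\<And>d. d \<in> D \<Longrightarrow> cyclotomic d = map_poly of_rat (c d)"
      by metis
    define r where "r = (\<Prod>d\<in>D. c d)"
    have r: "map_poly of_rat r = (\<Prod>d\<in>D. cyclotomic d)"
      by (simp add: r_def map_poly_of_rat_prod c)
    have "r \<noteq> 0"
      using r False by (auto simp: D_def prod_zero_iff)
    have "map_poly of_rat (Polynomial.monom 1 n - 1) = (Polynomial.monom 1 n - 1 :: complex poly)"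
      by (rule poly_eqI) (simp add: coeff_map_poly coeff_monom)
    also have "\<dots> = map_poly of_rat r * cyclotomic n"
      using False unfolding r monom_minus_one_eq_prod_cyclotomic[OF \<open>n \<noteq> 0\<close>[unfolded neq0_conv]]
      by (subst prod.remove[of _ n]) (auto simp: D_def)
    finally show ?thesis
      using map_poly_of_rat_cofactor \<open>r \<noteq> 0\<close> by blast
  qed
qed

lemma norm_poly_cyclotomic_ge: "\<bar>norm w - 1\<bar> ^ totient n \<le> norm (poly (cyclotomic n) w)"
proof -
  have "\<bar>norm w - 1\<bar> ^ totient n = (\<Prod>j\<in>totatives n. \<bar>norm w - 1\<bar>)"
    by (simp add: totient_def)
  also have "\<dots> \<le> (\<Prod>j\<in>totatives n. norm (w - cis (2 * pi * real j / real n)))"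
    by (intro prod_mono) (metis abs_ge_zero norm_cis norm_triangle_ineq3)
  also have "\<dots> = norm (poly (cyclotomic n) w)"
    by (simp add: cyclotomic_altdef poly_prod prod_norm)
  finally show ?thesis .
qed

section \<open>Monic factors of monic integer polynomials\<close>

lemma map_poly_of_int_mult:
  "map_poly (of_int :: int \<Rightarrow> 'a::comm_ring_1) (p * q) = map_poly of_int p * map_poly of_int q"
  by (rule poly_eqI) (simp add: coeff_map_poly coeff_mult)

lemma rat_poly_common_denominator:
  fixes p :: "rat poly"
  obtains d :: int and p' :: "int poly" where "d > 0" "map_poly of_int p' = Polynomial.smult (of_int d) p"
proof -
  define den where "den i = snd (quotient_of (poly.coeff p i))" for i
  define d where "d = (\<Prod>i\<le>degree p. den i)"
  have den_pos: "den i > 0" for i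
    by (simp add: den_def quotient_of_denom_pos')
  have "poly.coeff (Polynomial.smult (of_int d) p) i \<in> \<int>" for i
  proof (cases "i \<le> degree p")
    case True
    obtain a where a: "poly.coeff p i = of_int a / of_int (den i)"
      unfolding den_def by (metis prod.collapse quotient_of_div)
    have "d = den i * (\<Prod>j\<in>{..degree p} - {i}. den j)"
      unfolding d_def using True by (subst prod.remove[of _ i]) auto
    hence "poly.coeff (Polynomial.smult (of_int d) p) i = of_int (a * (\<Prod>j\<in>{..degree p} - {i}. den j))"
      using den_pos[of i] by (simp add: a)
    thus ?thesis
      by (metis Ints_of_int)
  qed (simp add: coeff_eq_0)
  then obtain p' where "Polynomial.smult (of_int d) p = map_poly of_int p'"
    by (rule intpolyE)
  moreover have "d > 0"
    unfolding d_def using den_pos by (intro prod_pos) auto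
  ultimately show ?thesis
    using that by simp
qed

lemma content_int_poly_nonneg: "content (p :: int poly) \<ge> 0"
  by (metis abs_ge_zero normalize_content normalize_int_def)

lemma dvd_factor_eq_of_mult_eq:
  fixes a b N M :: int
  assumes "a dvd N" "b dvd M" "a * b = N * M" "a \<ge> 0" "N > 0" "M > 0"
  shows "a = N"
proof (rule ccontr)
  assume "a \<noteq> N"
  with assms(1,5) have "a < N"
    by (simp add: zdvd_imp_le order.not_eq_order_implies_strict)
  moreover have "b \<le> M"
    using assms(2,6) by (rule zdvd_imp_le)
  ultimately have "a * b < N * M"
    using assms(4,6) by (meson le_less_trans mult_left_mono mult_strict_right_mono)
  thus False
    using assms(3) by simp
qed

lemma lead_coeff_of_scaled_monic:
  fixes q :: "rat poly" and q' :: "int poly"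
  assumes "map_poly of_int q' = Polynomial.smult (of_int d) q" "lead_coeff q = 1" "d \<noteq> 0"
  shows "lead_coeff q' = d"
proof -
  have "degree q' = degree q"
    using arg_cong[OF assms(1), of degree] assms(3) by (simp add: degree_map_poly)
  thus ?thesis
    using arg_cong[OF assms(1), of "\<lambda>p. poly.coeff p (degree q)"] assms(2)
    by (simp add: coeff_map_poly)
qed

text \<open>Gauss's lemma for monic factors: clearing denominators, \<open>N q \<cdot> M s = N M p\<close> with integral
  \<open>N q\<close> and \<open>M s\<close> of leading coefficients \<open>N\<close> and \<open>M\<close>; since contents are multiplicative and
  \<open>p\<close> is primitive, the content of \<open>N q\<close> must be all of \<open>N\<close>.\<close>

lemma monic_factor_of_monic_int_poly:
  fixes p :: "int poly" and q s :: "rat poly"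
  assumes eq: "map_poly of_int p = q * s" and p: "lead_coeff p = 1" and q: "lead_coeff q = 1"
  shows "\<exists>q'. q = map_poly of_int q'"
proof -
  have s: "lead_coeff s = 1"
    using arg_cong[OF eq, of lead_coeff] p q by (simp add: lead_coeff_mult degree_map_poly coeff_map_poly)
  obtain N Q where N: "N > 0" and Q: "map_poly of_int Q = Polynomial.smult (of_int N) q"
    by (rule rat_poly_common_denominator)
  obtain M S where M: "M > 0" and S: "map_poly of_int S = Polynomial.smult (of_int M) s"
    by (rule rat_poly_common_denominator)
  have "map_poly of_int (Q * S) = (map_poly of_int (Polynomial.smult (N * M) p) :: rat poly)"
    by (simp add: map_poly_of_int_mult map_poly_smult Q S eq mult.commute[of M N] flip: of_int_mult)
  hence QS: "Q * S = Polynomial.smult (N * M) p"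
    by (metis coeff_map_poly of_int_eq_iff of_int_0 poly_eqI)
  have "content p = 1"
    using content_dvd_coeff[of p "degree p"] content_int_poly_nonneg[of p] p
    by (simp add: zdvd1_eq)
  hence contents: "content Q * content S = N * M"
    using arg_cong[OF QS, of content] N M by (simp add: content_mult abs_mult)
  have "content Q dvd N" "content S dvd M"
    using content_dvd_coeff[of Q "degree Q"] content_dvd_coeff[of S "degree S"]
      lead_coeff_of_scaled_monic[OF Q q] lead_coeff_of_scaled_monic[OF S s] N M by simp_all
  hence "content Q = N"
    using contents content_int_poly_nonneg[of Q] N M by (rule dvd_factor_eq_of_mult_eq)
  hence "poly.coeff q i \<in> \<int>" for i
    using arg_cong[OF Q, of "\<lambda>p. poly.coeff p i"] content_dvd_coeff[of Q i] N
    by (auto simp: coeff_map_poly elim!: dvdE) (metis Ints_of_int)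
  thus ?thesis
    by (metis intpolyE)
qed

section \<open>Polynomials in a linear operator and common eigenvectors\<close>

text \<open>A copy of \<open>vector_space\<close>: definitions made directly in \<open>vector_space\<close> would
  also be inherited, under the same short names, by its global interpretation \<open>real_vector\<close>.\<close>

locale field_vector_space = vector_space scale
  for scale :: "'a::field \<Rightarrow> 'v::ab_group_add \<Rightarrow> 'v"
begin

definition poly_op :: "'a poly \<Rightarrow> ('v \<Rightarrow> 'v) \<Rightarrow> 'v \<Rightarrow> 'v" where
  "poly_op p T w = (\<Sum>i\<le>degree p. scale (poly.coeff p i) ((T ^^ i) w))"

lemma poly_op_eq_sum_lessThan:
  assumes "degree p < N"
  shows "poly_op p T w = (\<Sum>i<N. scale (poly.coeff p i) ((T ^^ i) w))"
  unfolding poly_op_def using assms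
  by (intro sum.mono_neutral_left) (auto simp: coeff_eq_0)

lemma poly_op_0 [simp]: "poly_op 0 T w = 0"
  by (simp add: poly_op_def)

lemma poly_op_add: "poly_op (p + q) T w = poly_op p T w + poly_op q T w"
proof -
  define N where "N = Suc (max (degree p) (degree q))"
  have "degree (p + q) < N" "degree p < N" "degree q < N"
    using degree_add_le_max[of p q] by (auto simp: N_def)
  thus ?thesis
    by (simp add: poly_op_eq_sum_lessThan scale_left_distrib sum.distrib)
qed

lemma poly_op_sum: "poly_op (\<Sum>i\<in>I. p i) T w = (\<Sum>i\<in>I. poly_op (p i) T w)"
  by (induction I rule: infinite_finite_induct) (simp_all add: poly_op_add)

lemma poly_op_smult: "poly_op (Polynomial.smult c p) T w = scale c (poly_op p T w)"
proof -
  have "degree (Polynomial.smult c p) < Suc (degree p)"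
    using degree_smult_le[of c p] by simp
  thus ?thesis
    by (simp add: poly_op_eq_sum_lessThan poly_op_eq_sum_lessThan[of p "Suc (degree p)"]
        scale_sum_right del: sum.lessThan_Suc)
qed

lemma poly_op_diff: "poly_op (p - q) T w = poly_op p T w - poly_op q T w"
proof -
  define N where "N = Suc (max (degree p) (degree q))"
  have "degree (p - q) < N" "degree p < N" "degree q < N"
    using degree_diff_le_max[of p q] by (auto simp: N_def)
  thus ?thesis
    by (simp add: poly_op_eq_sum_lessThan scale_left_diff_distrib sum_subtractf)
qed

lemma poly_op_pCons_0:
  assumes "Vector_Spaces.linear scale scale T"
  shows "poly_op (pCons 0 p) T w = T (poly_op p T w)"
proof -
  interpret T: Vector_Spaces.linear scale scale T by fact
  have "poly_op (pCons 0 p) T w = (\<Sum>i<Suc (Suc (degree p)). scale (poly.coeff (pCons 0 p) i) ((T ^^ i) w))"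
    by (rule poly_op_eq_sum_lessThan) (simp add: degree_pCons_le le_imp_less_Suc)
  also have "\<dots> = (\<Sum>i<Suc (degree p). scale (poly.coeff p i) (T ((T ^^ i) w)))"
    by (subst sum.lessThan_Suc_shift) (simp add: funpow_swap1)
  also have "\<dots> = T (poly_op p T w)"
    by (simp add: poly_op_eq_sum_lessThan[of p "Suc (degree p)"] T.sum T.scale del: sum.lessThan_Suc)
  finally show ?thesis .
qed

lemma poly_op_mult_linear_factor:
  assumes "Vector_Spaces.linear scale scale T"
  shows "poly_op (p * [:- c, 1:]) T w = T (poly_op p T w) - scale c (poly_op p T w)"
proof -
  have "p * [:- c, 1:] = pCons 0 p - Polynomial.smult c p"
    by (simp add: mult_pCons_right)
  thus ?thesis
    by (simp add: poly_op_diff poly_op_smult poly_op_pCons_0[OF assms])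
qed

lemma poly_op_in_subspace:
  assumes "subspace W" "\<And>x. x \<in> W \<Longrightarrow> T x \<in> W" "w \<in> W"
  shows "poly_op p T w \<in> W"
proof -
  have "(T ^^ i) w \<in> W" for i
    by (induction i) (simp_all add: assms)
  thus ?thesis
    unfolding poly_op_def using assms(1) by (intro subspace_sum subspace_scale) auto
qed


lemma poly_op_monom: "poly_op (Polynomial.monom c n) T w = scale c ((T ^^ n) w)"
proof -
  have "poly_op (Polynomial.monom c n) T w = (\<Sum>i<Suc n. if i = n then scale c ((T ^^ i) w) else 0)"
    by (subst poly_op_eq_sum_lessThan[of _ "Suc n"]) (auto simp: degree_monom_le le_imp_less_Suc coeff_monom)
  thus ?thesis
    by simp
qed

definition eigenspace :: "('v \<Rightarrow> 'v) \<Rightarrow> 'a \<Rightarrow> 'v set" where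
  "eigenspace T c = {x. T x = scale c x}"

lemma subspace_eigenspace:
  assumes "Vector_Spaces.linear scale scale T"
  shows "subspace (eigenspace T c)"
proof -
  interpret T: Vector_Spaces.linear scale scale T by fact
  show ?thesis
    by (auto simp: subspace_def eigenspace_def T.add T.scale scale_right_distrib scale_left_commute)
qed

lemma eigenspace_invariant:
  assumes "Vector_Spaces.linear scale scale S" "\<And>x. S (T x) = T (S x)" "x \<in> eigenspace T c"
  shows "S x \<in> eigenspace T c"
proof -
  interpret S: Vector_Spaces.linear scale scale S by fact
  have "T (S x) = S (T x)"
    by (simp add: assms(2))
  also have "\<dots> = scale c (S x)"
    using assms(3) by (simp add: eigenspace_def S.scale)
  finally show ?thesis
    by (simp add: eigenspace_def)
qed

lemma poly_op_in_eigenspace: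
  assumes "Vector_Spaces.linear scale scale T" "poly_op (p * [:- c, 1:]) T w = 0"
  shows "poly_op p T w \<in> eigenspace T c"
  using assms(2) unfolding poly_op_mult_linear_factor[OF assms(1)] eigenspace_def by simp

text \<open>In a finite-dimensional invariant subspace the iterates \<open>T\<^sup>i w\<close> cannot all be
  linearly independent.\<close>

lemma annihilating_poly_exists:
  assumes "finite S" "W \<subseteq> span S" "\<And>x. x \<in> W \<Longrightarrow> T x \<in> W" "w \<in> W"
  shows "\<exists>g. g \<noteq> 0 \<and> poly_op g T w = 0"
proof -
  define n where "n = card S"
  define f where "f i = (T ^^ i) w" for i
  have "f i \<in> W" for i
    unfolding f_def by (induction i) (simp_all add: assms)
  hence f_span: "f i \<in> span S" for i
    using assms(2) by blast
  show ?thesis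
  proof (cases "inj_on f {..n}")
    case True
    have "\<not> independent (f ` {..n})"
      using independent_span_bound[OF assms(1), of "f ` {..n}"] f_span True
      by (auto simp: card_image n_def)
    then obtain a where a: "\<exists>v\<in>f ` {..n}. a v \<noteq> 0" "(\<Sum>v\<in>f ` {..n}. scale (a v) v) = 0"
      using dependent_finite[of "f ` {..n}"] by auto
    define g where "g = (\<Sum>i\<le>n. Polynomial.monom (a (f i)) i)"
    have "g \<noteq> 0"
      using a(1) by (auto simp: g_def poly_eq_iff coeff_sum coeff_monom)
    have "poly_op g T w = (\<Sum>i\<le>n. scale (a (f i)) (f i))"
      by (simp add: g_def poly_op_sum poly_op_monom f_def)
    also have "\<dots> = (\<Sum>v\<in>f ` {..n}. scale (a v) v)"
      using sum.reindex[OF True, of "\<lambda>v. scale (a v) v"] by simp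
    finally have "poly_op g T w = 0"
      using a(2) by simp
    with \<open>g \<noteq> 0\<close> show ?thesis
      by blast
  next
    case False
    then obtain i j where "i \<noteq> j" "f i = f j"
      by (auto simp: inj_on_def)
    have "poly.coeff (Polynomial.monom 1 i - Polynomial.monom 1 j) i = 1"
      using \<open>i \<noteq> j\<close> by (simp add: coeff_monom)
    moreover have "poly_op (Polynomial.monom 1 i - Polynomial.monom 1 j) T w = 0"
      using \<open>f i = f j\<close> by (simp add: poly_op_diff poly_op_monom f_def)
    ultimately show ?thesis
      by (metis coeff_0 zero_neq_one)
  qed
qed


end

locale alg_closed_vector_space = field_vector_space scale
  for scale :: "'a::alg_closed_field \<Rightarrow> 'v::ab_group_add \<Rightarrow> 'v"
begin

text \<open>Take an annihilating polynomial \<open>g\<close> of least degree and split off a linear factor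
  \<open>g = h (X - c)\<close>: by minimality \<open>h(T) w \<noteq> 0\<close>, and it lies in the \<open>c\<close>-eigenspace.\<close>

lemma eigenvector_exists:
  assumes "finite S" "subspace W" "W \<subseteq> span S" "Vector_Spaces.linear scale scale T"
    "\<And>x. x \<in> W \<Longrightarrow> T x \<in> W" "w \<in> W" "w \<noteq> 0"
  shows "\<exists>v\<in>W. v \<noteq> 0 \<and> (\<exists>c. v \<in> eigenspace T c)"
proof -
  let ?R = "\<lambda>g. g \<noteq> 0 \<and> poly_op g T w = 0"
  obtain g0 where "?R g0"
    using annihilating_poly_exists[of S W T w] assms by blast
  then obtain g where g: "?R g" and least: "\<And>h. ?R h \<Longrightarrow> degree g \<le> degree h"
    using ex_has_least_nat[of ?R g0 degree] by blast
  have "degree g > 0"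
  proof (rule ccontr)
    assume "\<not> degree g > 0"
    then obtain a where "g = [:a:]"
      by (auto elim: degree_eq_zeroE)
    thus False
      using g assms(7) by (simp add: poly_op_def)
  qed
  then obtain c where "poly g c = 0"
    using alg_closed_imp_poly_has_root by blast
  hence "[:- c, 1:] dvd g"
    by (simp add: poly_eq_0_iff_dvd)
  then obtain h where gh: "g = h * [:- c, 1:]"
    by (auto simp: mult.commute elim!: dvdE)
  have "h \<noteq> 0"
    using g gh by auto
  hence "degree h < degree g"
    unfolding gh by (subst degree_mult_eq) auto
  hence "poly_op h T w \<noteq> 0"
    using least[of h] \<open>h \<noteq> 0\<close> by auto
  moreover have "poly_op h T w \<in> W"
    using assms(2,5,6) by (rule poly_op_in_subspace)
  moreover have "poly_op h T w \<in> eigenspace T c"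
    using assms(4) g unfolding gh by (intro poly_op_in_eigenspace) auto
  ultimately show ?thesis
    by blast
qed

lemma common_eigenvector_exists:
  assumes "finite F" "finite S" "subspace W" "W \<subseteq> span S" "w \<in> W" "w \<noteq> 0"
    and "\<And>T. T \<in> F \<Longrightarrow> Vector_Spaces.linear scale scale T \<and> (\<forall>x\<in>W. T x \<in> W)"
    and "\<And>T T' x. T \<in> F \<Longrightarrow> T' \<in> F \<Longrightarrow> T (T' x) = T' (T x)"
  shows "\<exists>v\<in>W. v \<noteq> 0 \<and> (\<forall>T\<in>F. \<exists>c. v \<in> eigenspace T c)"
  using assms(1,3-8)
proof (induction F arbitrary: W w rule: finite_induct)
  case empty
  thus ?case
    by blast
next
  case (insert T F)
  have lin: "Vector_Spaces.linear scale scale T'" if "T' \<in> insert T F" for T'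
    using insert.prems(5) that by blast
  obtain v c where v: "v \<in> W" "v \<noteq> 0" "v \<in> eigenspace T c"
    using eigenvector_exists[of S W T w] assms(2) insert.prems lin by blast
  define W' where "W' = W \<inter> eigenspace T c"
  have "subspace W'"
    unfolding W'_def using insert.prems(1) subspace_eigenspace[OF lin] by (intro subspace_inter) auto
  moreover have "W' \<subseteq> span S" "v \<in> W'"
    using insert.prems(2) v by (auto simp: W'_def)
  moreover have "Vector_Spaces.linear scale scale T' \<and> (\<forall>x\<in>W'. T' x \<in> W')" if "T' \<in> F" for T'
    using insert.prems(5,6) that lin eigenspace_invariant[OF lin] by (auto simp: W'_def)
  ultimately obtain v' where "v' \<in> W'" "v' \<noteq> 0" "\<forall>T'\<in>F. \<exists>c. v' \<in> eigenspace T' c"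
    using insert.IH[of W' v] insert.prems(6) v(2) by blast
  thus ?case
    by (auto simp: W'_def)
qed

end

interpretation rat_vs: field_vector_space "\<lambda>(c::rat) (x::complex). of_rat c * x"
  by unfold_locales (auto simp: algebra_simps of_rat_add of_rat_mult)

interpretation rat_vs_pair:
  vector_space_pair "\<lambda>(c::rat) (x::complex). of_rat c * x" "\<lambda>(c::rat) (x::complex). of_rat c * x"
  by unfold_locales

interpretation fun_vs: alg_closed_vector_space "\<lambda>(c::complex) (f::complex \<Rightarrow> complex) x. c * f x"
  by unfold_locales (auto simp: fun_eq_iff algebra_simps)

section \<open>Minimal polynomials\<close>

locale rat_minpoly =
  fixes u :: complex and q :: "rat poly"
  assumes monic: "lead_coeff q = 1"
    and root: "poly (map_poly of_rat q) u = 0"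
    and minimal: "\<And>p. p \<noteq> 0 \<Longrightarrow> poly (map_poly of_rat p) u = 0 \<Longrightarrow> degree q \<le> degree p"

lemma rat_minpoly_exists:
  assumes "algebraic u"
  shows "\<exists>q. rat_minpoly u q"
proof -
  let ?R = "\<lambda>p :: rat poly. p \<noteq> 0 \<and> poly (map_poly of_rat p) u = 0"
  obtain p where "p \<noteq> 0" "poly (map_poly of_int p) u = 0"
    using assms by (rule algebraicE')
  hence "?R (map_poly of_int p)"
    by (simp add: map_poly_map_poly o_def map_poly_eq_0_iff)
  then obtain p0 where p0: "?R p0" and least: "\<And>p. ?R p \<Longrightarrow> degree p0 \<le> degree p"
    using ex_has_least_nat[of ?R _ degree] by blast
  define q where "q = Polynomial.smult (inverse (lead_coeff p0)) p0"
  have "rat_minpoly u q"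
    by unfold_locales (use p0 least in \<open>auto simp: q_def\<close>)
  thus ?thesis ..
qed

context rat_minpoly
begin

lemma nonzero [simp]: "q \<noteq> 0"
  using monic by auto

lemma degree_pos: "degree q > 0"
proof (rule ccontr)
  assume "\<not> degree q > 0"
  then obtain c where "q = [:c:]"
    by (auto elim: degree_eq_zeroE)
  hence "q = 1"
    using monic by (simp add: one_pCons)
  thus False
    using root by simp
qed

lemma dvd_of_root:
  assumes "poly (map_poly of_rat p) u = 0"
  shows "q dvd p"
proof -
  have "poly (map_poly of_rat (p mod q)) u = 0"
    using assms root
    by (metis add_0 mult_div_mod_eq mult_zero_left poly_map_poly_of_rat_add poly_map_poly_of_rat_mult)
  hence "p mod q = 0"
    using minimal degree_mod_less[of q p] by fastforce
  thus ?thesis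
    by (simp add: mod_eq_0_iff_dvd)
qed

lemma root_in_conjugates:
  assumes "poly (map_poly of_rat q) z = 0"
  shows "z \<in> conjugates u"
  unfolding conjugates_def
proof safe
  fix p assume "poly (map_poly of_rat p) u = 0"
  hence "q dvd p"
    by (rule dvd_of_root)
  then obtain s where "p = q * s"
    by (elim dvdE)
  thus "poly (map_poly of_rat p) z = 0"
    using assms by simp
qed

lemma coeff_0_nonzero:
  assumes "u \<noteq> 0"
  shows "poly.coeff q 0 \<noteq> 0"
proof
  assume "poly.coeff q 0 = 0"
  then obtain r where q: "q = pCons 0 r"
    by (cases q) auto
  have "r \<noteq> 0" "poly (map_poly of_rat r) u = 0"
    using root assms nonzero by (auto simp: q map_poly_pCons)
  hence "degree q \<le> degree r"
    by (rule minimal)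
  thus False
    using \<open>r \<noteq> 0\<close> by (simp add: q)
qed

lemma int_coeffs:
  assumes "algebraic_int u"
  shows "\<exists>q'. q = map_poly of_int q'"
proof -
  obtain p where p: "poly (map_poly of_int p) u = 0" "lead_coeff p = 1"
    using assms by (auto simp: algebraic_int_altdef_ipoly)
  have "map_poly of_rat (map_poly of_int p) = (map_poly of_int p :: complex poly)"
    by (simp add: map_poly_map_poly o_def)
  hence "q dvd map_poly of_int p"
    using p(1) by (intro dvd_of_root) simp
  then obtain s where "map_poly of_int p = q * s"
    by (elim dvdE)
  thus ?thesis
    using monic_factor_of_monic_int_poly p(2) monic by blast
qed

text \<open>The constant coefficient of \<open>q\<close> is a nonzero integer and, up to sign, the product of the
  roots of \<open>q\<close>, none of which lies on the unit circle.\<close>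

lemma root_outside_unit_disc:
  assumes "algebraic_int u" "u \<noteq> 0" "\<forall>z\<in>conjugates u. norm z \<noteq> 1"
  shows "\<exists>z :: complex. poly (map_poly of_rat q) z = 0 \<and> norm z > 1"
proof (rule ccontr)
  assume no_big_root: "\<not> ?thesis"
  obtain r where r: "Polynomial.smult (lead_coeff (map_poly of_rat q)) (\<Prod>i<degree q. [:- r i, 1:]) =
      (map_poly of_rat q :: complex poly)"
    using complex_poly_decompose'[of "map_poly of_rat q"] by auto
  hence r: "map_poly of_rat q = (\<Prod>i<degree q. [:- r i, 1:])"
    using monic by (simp add: coeff_map_poly)
  have "norm (r i) < 1" if "i < degree q" for i
  proof -
    have "poly (map_poly of_rat q) (r i) = 0"
      using that by (auto simp: r poly_prod)
    thus ?thesis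
      using no_big_root assms(3) root_in_conjugates by force
  qed
  hence "(\<Prod>i<degree q. norm (r i)) < (\<Prod>i<degree q. 1)"
    using degree_pos by (intro prod_mono_strict) (auto intro: less_imp_le)
  also have "(\<Prod>i<degree q. norm (r i)) = norm (poly (map_poly of_rat q) (0 :: complex))"
    by (simp add: r poly_prod prod_norm flip: prod_norm[of "\<lambda>i. - r i"])
  also have "poly (map_poly of_rat q) (0 :: complex) = of_rat (poly.coeff q 0)"
    by (simp add: poly_0_coeff_0 coeff_map_poly)
  finally have "norm (of_rat (poly.coeff q 0) :: complex) < 1"
    by simp
  moreover obtain q' where "q = map_poly of_int q'"
    using int_coeffs assms(1) by blast
  ultimately show False
    using coeff_0_nonzero[OF assms(2)] by (auto simp: coeff_map_poly)
qed

lemma inj_on_powers: "inj_on (\<lambda>i. u ^ i) {..<degree q}"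
proof (rule inj_onI, rule ccontr)
  fix i j assume ij: "i \<in> {..<degree q}" "j \<in> {..<degree q}" "u ^ i = u ^ j" "i \<noteq> j"
  let ?p = "Polynomial.monom 1 i - Polynomial.monom (1 :: rat) j"
  have "poly.coeff ?p i = 1"
    using ij by (simp add: coeff_monom)
  hence "?p \<noteq> 0"
    by (metis coeff_0 zero_neq_one)
  moreover have "poly (map_poly of_rat ?p) u = 0"
    using ij by (simp add: map_poly_of_rat_diff map_poly_monom poly_monom)
  ultimately have "degree q \<le> degree ?p"
    by (rule minimal)
  moreover have "degree ?p < degree q"
    using ij by (intro le_less_trans[OF degree_diff_le_max]) (auto simp: degree_monom_eq)
  ultimately show False
    by simp
qed

lemma independent_powers: "rat_vs.independent ((\<lambda>i. u ^ i) ` {..<degree q})"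
proof
  let ?E = "(\<lambda>i. u ^ i) ` {..<degree q}"
  assume "rat_vs.dependent ?E"
  then obtain c where c: "\<exists>v\<in>?E. c v \<noteq> 0" "(\<Sum>v\<in>?E. of_rat (c v) * v) = 0"
    using rat_vs.dependent_finite[of ?E] by auto
  define p where "p = (\<Sum>i<degree q. Polynomial.monom (c (u ^ i)) i)"
  have coeff_p: "poly.coeff p i = (if i < degree q then c (u ^ i) else 0)" for i
    by (simp add: p_def coeff_sum coeff_monom)
  obtain i where "i < degree q" "c (u ^ i) \<noteq> 0"
    using c(1) by auto
  hence "p \<noteq> 0"
    using coeff_p[of i] by auto
  moreover have "poly (map_poly of_rat p) u = (\<Sum>v\<in>?E. of_rat (c v) * v)"
    using inj_on_powers by (simp add: p_def map_poly_of_rat_sum poly_sum poly_monom map_poly_monom sum.reindex)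
  ultimately have "degree q \<le> degree p"
    using c(2) by (intro minimal) auto
  moreover have "degree p \<le> degree q - 1"
    using coeff_p by (intro degree_le) auto
  ultimately show False
    using degree_pos by simp
qed

end

section \<open>Subfields of \<open>\<complex>\<close> and their embeddings\<close>

context
  fixes K :: "complex set"
  assumes K: "subfield_C K"
begin

lemma subfield_C_0 [simp]: "0 \<in> K" and subfield_C_1 [simp]: "1 \<in> K"
  using K by (auto simp: subfield_C_def)

lemma subfield_C_add [simp, intro]: "x \<in> K \<Longrightarrow> y \<in> K \<Longrightarrow> x + y \<in> K"
  and subfield_C_mult [simp, intro]: "x \<in> K \<Longrightarrow> y \<in> K \<Longrightarrow> x * y \<in> K"
  and subfield_C_uminus [simp, intro]: "x \<in> K \<Longrightarrow> - x \<in> K"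
  using K by (auto simp: subfield_C_def)

lemma subfield_C_inverse [simp, intro]: "x \<in> K \<Longrightarrow> inverse x \<in> K"
  using K by (cases "x = 0") (auto simp: subfield_C_def)

lemma subfield_C_divide [simp, intro]: "x \<in> K \<Longrightarrow> y \<in> K \<Longrightarrow> x / y \<in> K"
  by (auto simp: divide_inverse)

lemma subfield_C_power [simp, intro]: "x \<in> K \<Longrightarrow> x ^ n \<in> K"
  by (induction n) auto

lemma subfield_C_sum [simp, intro]: "(\<And>i. i \<in> I \<Longrightarrow> f i \<in> K) \<Longrightarrow> (\<Sum>i\<in>I. f i) \<in> K"
  by (induction I rule: infinite_finite_induct) auto

lemma subfield_C_of_nat [simp, intro]: "of_nat n \<in> K"
  by (induction n) auto

lemma subfield_C_of_int [simp, intro]: "of_int z \<in> K"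
  by (cases z) (auto simp del: of_nat_Suc)

lemma subfield_C_Rats [simp, intro]: "c \<in> \<rat> \<Longrightarrow> c \<in> K"
  by (auto elim!: Rats_cases')

context
  fixes \<sigma> assumes \<sigma>: "\<sigma> \<in> embeddings K"
begin

lemma embedding_1 [simp]: "\<sigma> 1 = 1"
  and embedding_add: "x \<in> K \<Longrightarrow> y \<in> K \<Longrightarrow> \<sigma> (x + y) = \<sigma> x + \<sigma> y"
  and embedding_mult: "x \<in> K \<Longrightarrow> y \<in> K \<Longrightarrow> \<sigma> (x * y) = \<sigma> x * \<sigma> y"
  using \<sigma> by (auto simp: embeddings_def)

lemma embedding_outside: "x \<notin> K \<Longrightarrow> \<sigma> x = undefined"
  using \<sigma> by (auto simp: embeddings_def PiE_def extensional_def)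

lemma embedding_0 [simp]: "\<sigma> 0 = 0"
  using embedding_add[of 0 0] by simp

lemma embedding_uminus: "x \<in> K \<Longrightarrow> \<sigma> (- x) = - \<sigma> x"
  using embedding_add[of x "- x"] by (auto simp: add_eq_0_iff)

lemma embedding_power: "x \<in> K \<Longrightarrow> \<sigma> (x ^ n) = \<sigma> x ^ n"
  by (induction n) (auto simp: embedding_mult)

lemma embedding_sum: "(\<And>i. i \<in> I \<Longrightarrow> f i \<in> K) \<Longrightarrow> \<sigma> (\<Sum>i\<in>I. f i) = (\<Sum>i\<in>I. \<sigma> (f i))"
  by (induction I rule: infinite_finite_induct) (auto simp: embedding_add)

lemma embedding_inverse: "x \<in> K \<Longrightarrow> \<sigma> (inverse x) = inverse (\<sigma> x)"
  using embedding_mult[of x "inverse x"] by (cases "x = 0") (auto intro: inverse_unique[symmetric])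

lemma embedding_of_nat [simp]: "\<sigma> (of_nat n) = of_nat n"
  by (induction n) (auto simp: embedding_add)

lemma embedding_of_int [simp]: "\<sigma> (of_int z) = of_int z"
  by (cases z) (simp_all add: embedding_uminus del: of_nat_Suc)

lemma embedding_Rats: "c \<in> \<rat> \<Longrightarrow> \<sigma> c = c"
  by (auto elim!: Rats_cases' simp: divide_inverse embedding_mult embedding_inverse)

lemma embedding_rat_combination:
  assumes "\<And>b. b \<in> B \<Longrightarrow> y b \<in> K"
  shows "\<sigma> (\<Sum>b\<in>B. of_rat (c b) * y b) = (\<Sum>b\<in>B. of_rat (c b) * \<sigma> (y b))"
  using assms by (simp add: embedding_sum embedding_mult embedding_Rats subfield_C_mult subfield_C_Rats)

lemma embedding_poly:
  assumes "x \<in> K"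
  shows "\<sigma> (poly (map_poly of_rat p) x) = poly (map_poly of_rat p) (\<sigma> x)"
  using embedding_rat_combination[of "{..degree p}" "\<lambda>i. x ^ i" "poly.coeff p"] assms
  by (simp add: poly_altdef coeff_map_poly embedding_power subfield_C_power)

lemma embedding_in_conjugates:
  assumes "x \<in> K"
  shows "\<sigma> x \<in> conjugates x"
  by (auto simp: conjugates_def simp flip: embedding_poly[OF assms])

end

end

section \<open>Embeddings of a finite extension\<close>

lemma sum_fun_apply: "(\<Sum>i\<in>I. f i) x = (\<Sum>i\<in>I. f i x)"
  by (induction I rule: infinite_finite_induct) auto

lemma rat_vs_poly_op_mult:
  "rat_vs.poly_op p (\<lambda>y. x * y) 1 = poly (map_poly of_rat p) x"
proof -
  have "((\<lambda>y. x * y) ^^ i) 1 = x ^ i" for i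
    by (induction i) auto
  thus ?thesis
    by (simp add: rat_vs.poly_op_def poly_altdef coeff_map_poly)
qed

locale finite_extension =
  fixes K :: "complex set" and B :: "complex set"
  assumes subfield: "subfield_C K" and finite_B: "finite B" and B_subset: "B \<subseteq> K"
    and B_spans: "\<And>x. x \<in> K \<Longrightarrow> \<exists>c. x = (\<Sum>b\<in>B. of_rat (c b) * b)"
begin

lemmas K_closed [simp] = subfield_C_0[OF subfield] subfield_C_1[OF subfield]
  subfield_C_add[OF subfield] subfield_C_mult[OF subfield] subfield_C_power[OF subfield]
  subfield_C_sum[OF subfield] subfield_C_Rats[OF subfield]

lemma K_subset_span: "K \<subseteq> rat_vs.span B"
proof
  fix x assume "x \<in> K"
  then obtain c where "x = (\<Sum>b\<in>B. of_rat (c b) * b)"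
    using B_spans by blast
  thus "x \<in> rat_vs.span B"
    by (simp add: rat_vs.span_sum rat_vs.span_scale rat_vs.span_base)
qed

lemma rat_poly_root_exists:
  assumes "x \<in> K"
  shows "\<exists>p. p \<noteq> 0 \<and> poly (map_poly of_rat p) x = 0"
proof -
  have "\<And>y. y \<in> K \<Longrightarrow> x * y \<in> K"
    using assms by simp
  from rat_vs.annihilating_poly_exists[of B K "\<lambda>y. x * y" 1, OF finite_B K_subset_span this]
  show ?thesis
    by (simp add: rat_vs_poly_op_mult)
qed

lemma embeddings_eqI:
  assumes \<sigma>: "\<sigma> \<in> embeddings K" and \<tau>: "\<tau> \<in> embeddings K" and eq: "\<And>b. b \<in> B \<Longrightarrow> \<sigma> b = \<tau> b"
  shows "\<sigma> = \<tau>"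
proof
  fix x
  show "\<sigma> x = \<tau> x"
  proof (cases "x \<in> K")
    case True
    then obtain c where x: "x = (\<Sum>b\<in>B. of_rat (c b) * b)"
      using B_spans by blast
    have "\<sigma> x = (\<Sum>b\<in>B. of_rat (c b) * \<sigma> b)"
      unfolding x by (rule embedding_rat_combination[OF subfield \<sigma>]) (use B_subset in auto)
    also have "\<dots> = (\<Sum>b\<in>B. of_rat (c b) * \<tau> b)"
      by (intro sum.cong refl) (simp add: eq)
    also have "\<dots> = \<tau> x"
      unfolding x by (rule embedding_rat_combination[OF subfield \<tau>, symmetric]) (use B_subset in auto)
    finally show ?thesis .
  qed (simp add: embedding_outside[OF subfield \<sigma>] embedding_outside[OF subfield \<tau>])
qed

text \<open>Each \<open>b \<in> B\<close> is sent to one of the finitely many roots of a rational polynomial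
  vanishing at \<open>b\<close>.\<close>

lemma finite_embeddings: "finite (embeddings K)"
proof -
  have "\<forall>b\<in>B. \<exists>p. p \<noteq> 0 \<and> poly (map_poly of_rat p) b = 0"
    using rat_poly_root_exists B_subset by blast
  then obtain P where P: "\<And>b. b \<in> B \<Longrightarrow> P b \<noteq> 0 \<and> poly (map_poly of_rat (P b)) b = 0"
    by metis
  let ?roots = "PiE B (\<lambda>b. {z. poly (map_poly of_rat (P b)) z = 0})"
  have "finite ?roots"
    using finite_B P by (intro finite_PiE) (auto intro: poly_roots_finite)
  moreover have "(\<lambda>\<sigma>. restrict \<sigma> B) ` embeddings K \<subseteq> ?roots"
  proof (rule image_subsetI)
    fix \<sigma> assume "\<sigma> \<in> embeddings K"
    have "poly (map_poly of_rat (P b)) (\<sigma> b) = 0" if "b \<in> B" for b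
      using embedding_poly[OF subfield \<open>\<sigma> \<in> embeddings K\<close>, of b "P b"] P that B_subset
        embedding_0[OF subfield \<open>\<sigma> \<in> embeddings K\<close>] by auto
    thus "restrict \<sigma> B \<in> ?roots"
      by auto
  qed
  moreover have "inj_on (\<lambda>\<sigma>. restrict \<sigma> B) (embeddings K)"
    by (intro inj_onI embeddings_eqI) (metis restrict_apply')+
  ultimately show ?thesis
    by (metis finite_imageD finite_subset)
qed


text \<open>\<open>\<rat>\<close>-linear maps \<open>K \<rightarrow> \<complex>\<close>, extended by \<open>0\<close> outside \<open>K\<close> so that they form a subspace of
  the complex vector space \<open>complex \<Rightarrow> complex\<close>.\<close>

definition rat_functionals :: "(complex \<Rightarrow> complex) set" where
  "rat_functionals = {l. (\<forall>x. x \<notin> K \<longrightarrow> l x = 0) \<and> (\<forall>x\<in>K. \<forall>y\<in>K. l (x + y) = l x + l y) \<and>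
     (\<forall>r. \<forall>x\<in>K. l (of_rat r * x) = of_rat r * l x)}"

definition mult_op :: "complex \<Rightarrow> (complex \<Rightarrow> complex) \<Rightarrow> complex \<Rightarrow> complex" where
  "mult_op a l = (\<lambda>x. if x \<in> K then l (a * x) else 0)"

lemma rat_functional_outside: "l \<in> rat_functionals \<Longrightarrow> x \<notin> K \<Longrightarrow> l x = 0"
  and rat_functional_add: "l \<in> rat_functionals \<Longrightarrow> x \<in> K \<Longrightarrow> y \<in> K \<Longrightarrow> l (x + y) = l x + l y"
  and rat_functional_of_rat: "l \<in> rat_functionals \<Longrightarrow> x \<in> K \<Longrightarrow> l (of_rat r * x) = of_rat r * l x"
  by (auto simp: rat_functionals_def)

lemma rat_functional_0: "l \<in> rat_functionals \<Longrightarrow> l 0 = 0"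
  using rat_functional_of_rat[of l 0 0] by simp

lemma rat_functional_rat_combination:
  assumes "l \<in> rat_functionals" "\<And>i. i \<in> I \<Longrightarrow> y i \<in> K"
  shows "l (\<Sum>i\<in>I. of_rat (c i) * y i) = (\<Sum>i\<in>I. of_rat (c i) * l (y i))"
  using assms(2)
proof (induction I rule: infinite_finite_induct)
  case (insert j I)
  thus ?case
    using assms(1) by (simp add: rat_functional_add rat_functional_of_rat)
qed (simp_all add: rat_functional_0[OF assms(1)])

lemma subspace_rat_functionals: "fun_vs.subspace rat_functionals"
  by (auto simp: fun_vs.subspace_def rat_functionals_def distrib_left mult.left_commute)

text \<open>A functional is determined by its values on \<open>B\<close>, so the coordinate functionals with
  respect to \<open>B\<close> span.\<close>

lemma rat_functionals_finite_dimensional: "\<exists>S. finite S \<and> rat_functionals \<subseteq> fun_vs.span S"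
proof -
  obtain coef where coef: "\<And>x. x \<in> K \<Longrightarrow> x = (\<Sum>b\<in>B. of_rat (coef x b) * b)"
    using B_spans by metis
  define coord where "coord b x = (if x \<in> K then of_rat (coef x b) else 0 :: complex)" for b x
  have "l \<in> fun_vs.span (coord ` B)" if l: "l \<in> rat_functionals" for l
  proof -
    have "l = (\<Sum>b\<in>B. (\<lambda>x. l b * coord b x))"
    proof
      fix x
      show "l x = (\<Sum>b\<in>B. (\<lambda>x. l b * coord b x)) x"
      proof (cases "x \<in> K")
        case True
        have "l x = (\<Sum>b\<in>B. of_rat (coef x b) * l b)"
          using rat_functional_rat_combination[OF l, of B "\<lambda>b. b" "coef x"] coef[OF True] B_subset
          by auto
        thus ?thesis
          using True by (simp add: coord_def sum_fun_apply mult.commute)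
      qed (simp add: coord_def sum_fun_apply rat_functional_outside[OF l])
    qed
    also have "\<dots> \<in> fun_vs.span (coord ` B)"
      by (intro fun_vs.span_sum fun_vs.span_scale fun_vs.span_base) auto
    finally show ?thesis .
  qed
  thus ?thesis
    using finite_B by blast
qed

lemma linear_mult_op:
  "Vector_Spaces.linear (\<lambda>c f x. c * f x) (\<lambda>c f x. c * f x) (mult_op a)"
  by (auto simp: Vector_Spaces.linear_iff fun_vs.vector_space_axioms mult_op_def fun_eq_iff)

lemma mult_op_in_rat_functionals:
  assumes "a \<in> K" "l \<in> rat_functionals"
  shows "mult_op a l \<in> rat_functionals"
proof -
  have "l (a * (of_rat r * x)) = of_rat r * l (a * x)" if "x \<in> K" for r x
    using rat_functional_of_rat[OF assms(2), of "a * x" r] assms(1) that by (simp add: mult.left_commute)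
  thus ?thesis
    using assms by (auto simp: rat_functionals_def mult_op_def distrib_left rat_functional_add)
qed

lemma mult_op_commute: "a \<in> K \<Longrightarrow> b \<in> K \<Longrightarrow> mult_op a (mult_op b l) = mult_op b (mult_op a l)"
  by (auto simp: mult_op_def fun_eq_iff mult.left_commute)

lemma funpow_mult_op:
  assumes "l \<in> rat_functionals" "a \<in> K"
  shows "(mult_op a ^^ i) l = mult_op (a ^ i) l"
proof (induction i)
  case 0
  show ?case
    using rat_functional_outside[OF assms(1)] by (auto simp: mult_op_def)
next
  case (Suc i)
  thus ?case
    using assms(2) by (auto simp: mult_op_def fun_eq_iff mult_ac)
qed

lemma poly_op_mult_op:
  assumes "l \<in> rat_functionals" "a \<in> K" "x \<in> K"
  shows "fun_vs.poly_op p (mult_op a) l x = (\<Sum>i\<le>degree p. poly.coeff p i * l (a ^ i * x))"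
  using assms(3) by (simp add: fun_vs.poly_op_def funpow_mult_op[OF assms(1,2)] sum_fun_apply mult_op_def)


lemma poly_op_rat_poly_mult_op:
  assumes "l \<in> rat_functionals" "a \<in> K" "x \<in> K"
  shows "fun_vs.poly_op (map_poly of_rat p) (mult_op a) l x = l (poly (map_poly of_rat p) a * x)"
proof -
  have "l (poly (map_poly of_rat p) a * x) = l (\<Sum>i\<le>degree p. of_rat (poly.coeff p i) * (a ^ i * x))"
    by (simp add: poly_altdef coeff_map_poly sum_distrib_right mult.assoc)
  also have "\<dots> = (\<Sum>i\<le>degree p. of_rat (poly.coeff p i) * l (a ^ i * x))"
    using assms by (intro rat_functional_rat_combination) auto
  finally show ?thesis
    using assms by (simp add: poly_op_mult_op coeff_map_poly)
qed

lemma rat_functional_extension: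
  assumes "rat_vs.independent E" "E \<subseteq> K"
  shows "\<exists>l\<in>rat_functionals. \<forall>e\<in>E. l e = f e"
proof -
  define L where "L = rat_vs_pair.construct E f"
  have "Vector_Spaces.linear (\<lambda>c x. of_rat c * x) (\<lambda>c x. of_rat c * x) L"
    unfolding L_def using assms(1) by (rule rat_vs_pair.linear_construct)
  hence "L (x + y) = L x + L y" "L (of_rat r * x) = of_rat r * L x" for x y r
    by (simp_all add: Vector_Spaces.linear_iff)
  hence "(\<lambda>x. if x \<in> K then L x else 0) \<in> rat_functionals"
    by (auto simp: rat_functionals_def)
  moreover have "L e = f e" if "e \<in> E" for e
    unfolding L_def using assms(1) that by (rule rat_vs_pair.construct_basis)
  ultimately show ?thesis
    using assms(2) by (intro bexI[of _ "\<lambda>x. if x \<in> K then L x else 0"]) auto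
qed

lemma common_eigenvector_scalar:
  assumes l: "l \<in> rat_functionals"
    and eigen: "\<forall>b\<in>B. \<exists>c. l \<in> fun_vs.eigenspace (mult_op b) c"
    and "a \<in> K"
  shows "\<exists>s. \<forall>y\<in>K. l (a * y) = s * l y"
proof -
  obtain \<mu> where \<mu>: "\<And>b x. b \<in> B \<Longrightarrow> x \<in> K \<Longrightarrow> l (b * x) = \<mu> b * l x"
    using eigen by (simp add: fun_vs.eigenspace_def mult_op_def fun_eq_iff) metis
  obtain c where a: "a = (\<Sum>b\<in>B. of_rat (c b) * b)"
    using B_spans \<open>a \<in> K\<close> by blast
  have "l (a * y) = (\<Sum>b\<in>B. of_rat (c b) * \<mu> b) * l y" if "y \<in> K" for y
  proof -
    have "l (a * y) = l (\<Sum>b\<in>B. of_rat (c b) * (b * y))"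
      by (simp add: a sum_distrib_right mult.assoc)
    also have "\<dots> = (\<Sum>b\<in>B. of_rat (c b) * l (b * y))"
      using B_subset that by (intro rat_functional_rat_combination l) auto
    finally show ?thesis
      using B_subset that by (simp add: \<mu> subset_iff sum_distrib_right mult.assoc)
  qed
  thus ?thesis
    by blast
qed

text \<open>Normalised at \<open>1\<close>, a common eigenvector \<open>l\<close> becomes multiplicative: \<open>l (a x) = s\<^sub>a l x\<close>
  with \<open>s\<^sub>a = l a / l 1\<close>.\<close>

lemma embedding_of_common_eigenvector:
  assumes l: "l \<in> rat_functionals" "l \<noteq> 0"
    and eigen: "\<forall>b\<in>B. \<exists>c. l \<in> fun_vs.eigenspace (mult_op b) c"
  shows "l 1 \<noteq> 0" "(\<lambda>x. if x \<in> K then l x / l 1 else undefined) \<in> embeddings K"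
proof -
  note scalar = common_eigenvector_scalar[OF l(1) eigen]
  show l1: "l 1 \<noteq> 0"
  proof
    assume "l 1 = 0"
    have "l x = 0" for x
    proof (cases "x \<in> K")
      case True
      then obtain s where "\<forall>y\<in>K. l (x * y) = s * l y"
        using scalar by blast
      from this[rule_format, of 1] show ?thesis
        using \<open>l 1 = 0\<close> by simp
    qed (simp add: rat_functional_outside[OF l(1)])
    thus False
      using l(2) by auto
  qed
  have mult: "l (a * x) = l a * l x / l 1" if "a \<in> K" "x \<in> K" for a x
  proof -
    obtain s where s: "\<And>y. y \<in> K \<Longrightarrow> l (a * y) = s * l y"
      using scalar[OF \<open>a \<in> K\<close>] by blast
    have "l a = s * l 1"
      using s[of 1] by simp
    thus ?thesis
      using s[OF \<open>x \<in> K\<close>] l1 by (simp add: field_simps)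
  qed
  show "(\<lambda>x. if x \<in> K then l x / l 1 else undefined) \<in> embeddings K"
    using rat_functional_add[OF l(1)] l1 by (auto simp: embeddings_def mult add_divide_distrib)
qed

end

locale minpoly_in_extension = finite_extension K B + rat_minpoly u q
  for K B :: "complex set" and u :: complex and q :: "rat poly" +
  assumes u_in_K: "u \<in> K"
begin

lemma dual_functional_exists:
  "\<exists>l\<in>rat_functionals. \<forall>i<degree q. l (u ^ i) = (if i = degree q - 1 then 1 else 0)"
proof -
  have "(\<lambda>i. u ^ i) ` {..<degree q} \<subseteq> K"
    using u_in_K by auto
  then obtain l where l: "l \<in> rat_functionals"
    "\<And>i. i < degree q \<Longrightarrow> l (u ^ i) = (if u ^ i = u ^ (degree q - 1) then 1 else 0)"
    using rat_functional_extension[OF independent_powers, of "\<lambda>v. if v = u ^ (degree q - 1) then 1 else 0"]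
    by auto
  have "u ^ i = u ^ (degree q - 1) \<longleftrightarrow> i = degree q - 1" if "i < degree q" for i
    using inj_on_powers degree_pos that by (auto simp: inj_on_def)
  hence "\<forall>i<degree q. l (u ^ i) = (if i = degree q - 1 then 1 else 0)"
    using l(2) by simp
  with l(1) show ?thesis
    by blast
qed

lemma poly_op_minpoly_mult_op:
  assumes "l \<in> rat_functionals"
  shows "fun_vs.poly_op (map_poly of_rat q) (mult_op u) l = 0"
proof
  fix x
  show "fun_vs.poly_op (map_poly of_rat q) (mult_op u) l x = 0 x"
  proof (cases "x \<in> K")
    case True
    thus ?thesis
      using assms u_in_K root by (simp add: poly_op_rat_poly_mult_op rat_functional_0)
  next
    case False
    have "fun_vs.poly_op (map_poly of_rat q) (mult_op u) l \<in> rat_functionals"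
      using subspace_rat_functionals mult_op_in_rat_functionals[OF u_in_K] assms
      by (rule fun_vs.poly_op_in_subspace)
    thus ?thesis
      using False by (simp add: rat_functional_outside)
  qed
qed

text \<open>Write \<open>q = g (X - z)\<close> over \<open>\<complex>\<close> and apply \<open>g(mult_op u)\<close> to a functional \<open>l\<^sub>0\<close> dual to
  the highest power \<open>u\<^sup>d\<^sup>-\<^sup>1\<close>, \<open>d = degree q\<close>: the result is killed by \<open>mult_op u - z\<close> since \<open>q(mult_op u) = 0\<close>,
  and it takes the value \<open>1\<close> at \<open>1\<close> since \<open>g\<close> is monic of degree \<open>d - 1\<close>.\<close>

lemma eigenfunctional_for_root:
  assumes "poly (map_poly of_rat q) z = 0"
  shows "\<exists>v\<in>rat_functionals. v \<noteq> 0 \<and> v \<in> fun_vs.eigenspace (mult_op u) z"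
proof -
  obtain l0 where l0: "l0 \<in> rat_functionals"
    "\<And>i. i < degree q \<Longrightarrow> l0 (u ^ i) = (if i = degree q - 1 then 1 else 0)"
    using dual_functional_exists by blast
  have "[:- z, 1:] dvd map_poly of_rat q"
    using assms by (simp add: poly_eq_0_iff_dvd)
  then obtain g where g: "map_poly of_rat q = g * [:- z, 1:]"
    by (auto simp: mult.commute elim!: dvdE)
  have lead: "lead_coeff (g * [:- z, 1:]) = 1"
    using monic by (simp only: flip: g) (simp add: coeff_map_poly)
  have "degree q = degree (g * [:- z, 1:])"
    by (simp only: flip: g degree_map_poly_of_rat)
  also have "\<dots> = Suc (degree g)"
    by (rule monic_linear_cofactor(2)[OF lead])
  finally have deg_g: "degree q = Suc (degree g)" .
  note lead_g = monic_linear_cofactor(1)[OF lead]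
  define v where "v = fun_vs.poly_op g (mult_op u) l0"
  have "v \<in> rat_functionals"
    unfolding v_def using subspace_rat_functionals mult_op_in_rat_functionals[OF u_in_K] l0(1)
    by (rule fun_vs.poly_op_in_subspace)
  moreover have "v \<in> fun_vs.eigenspace (mult_op u) z"
    using poly_op_minpoly_mult_op[OF l0(1)] unfolding g v_def
    by (rule fun_vs.poly_op_in_eigenspace[OF linear_mult_op])
  moreover have "v 1 = 1"
  proof -
    have "v 1 = (\<Sum>i\<le>degree g. poly.coeff g i * l0 (u ^ i))"
      unfolding v_def using l0(1) u_in_K by (simp add: poly_op_mult_op)
    also have "\<dots> = (\<Sum>i\<le>degree g. if i = degree g then 1 else 0)"
      using l0(2) lead_g deg_g by (intro sum.cong refl) auto
    finally show ?thesis
      by simp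
  qed
  ultimately show ?thesis
    by (metis one_neq_zero zero_fun_def)
qed

lemma embedding_for_root:
  assumes "poly (map_poly of_rat q) z = 0"
  shows "\<exists>\<sigma>\<in>embeddings K. \<sigma> u = z"
proof -
  define W where "W = rat_functionals \<inter> fun_vs.eigenspace (mult_op u) z"
  obtain v where v: "v \<in> W" "v \<noteq> 0"
    using eigenfunctional_for_root[OF assms] by (auto simp: W_def)
  obtain S where S: "finite S" "rat_functionals \<subseteq> fun_vs.span S"
    using rat_functionals_finite_dimensional by blast
  have "fun_vs.subspace W"
    unfolding W_def
    by (intro fun_vs.subspace_inter subspace_rat_functionals fun_vs.subspace_eigenspace linear_mult_op)
  moreover have "W \<subseteq> fun_vs.span S"
    using S(2) by (auto simp: W_def)
  moreover have "Vector_Spaces.linear (\<lambda>c f x. c * f x) (\<lambda>c f x. c * f x) T \<and> (\<forall>l\<in>W. T l \<in> W)"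
    if "T \<in> mult_op ` B" for T
    using that B_subset u_in_K
    by (auto simp: W_def linear_mult_op mult_op_in_rat_functionals
        intro!: fun_vs.eigenspace_invariant[OF linear_mult_op] mult_op_commute)
  moreover have "T (T' l) = T' (T l)" if "T \<in> mult_op ` B" "T' \<in> mult_op ` B" for T T' l
    using that B_subset by (auto intro: mult_op_commute)
  ultimately obtain l where l: "l \<in> W" "l \<noteq> 0" "\<forall>T\<in>mult_op ` B. \<exists>c. l \<in> fun_vs.eigenspace T c"
    using fun_vs.common_eigenvector_exists[of "mult_op ` B" S W v] finite_B S(1) v by blast
  hence "l \<in> rat_functionals" "\<forall>b\<in>B. \<exists>c. l \<in> fun_vs.eigenspace (mult_op b) c"
    by (auto simp: W_def)
  note \<sigma> = embedding_of_common_eigenvector[OF this(1) l(2) this(2)]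
  have "l u = z * l 1"
    using l(1) u_in_K by (auto simp: W_def fun_vs.eigenspace_def mult_op_def fun_eq_iff dest!: spec[of _ 1])
  thus ?thesis
    using \<sigma> u_in_K by (intro bexI[OF _ \<sigma>(2)]) simp
qed

end

section \<open>Growth of the norm\<close>

lemma norm_nf_norm_poly_cyclotomic_ge:
  assumes "subfield_C K" "x \<in> K"
  shows "(\<Prod>\<sigma>\<in>embeddings K. \<bar>norm (\<sigma> x) - 1\<bar>) ^ totient n \<le> norm (nf_norm K (poly (cyclotomic n) x))"
proof -
  obtain c where c: "cyclotomic n = map_poly of_rat c"
    using cyclotomic_rational by blast
  have "(\<Prod>\<sigma>\<in>embeddings K. \<bar>norm (\<sigma> x) - 1\<bar>) ^ totient n
      = (\<Prod>\<sigma>\<in>embeddings K. \<bar>norm (\<sigma> x) - 1\<bar> ^ totient n)"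
    by (simp add: prod_power_distrib)
  also have "\<dots> \<le> (\<Prod>\<sigma>\<in>embeddings K. norm (poly (cyclotomic n) (\<sigma> x)))"
    by (intro prod_mono conjI norm_poly_cyclotomic_ge) simp
  also have "\<dots> = norm (nf_norm K (poly (cyclotomic n) x))"
    using assms by (simp add: nf_norm_def prod_norm c embedding_poly)
  finally show ?thesis .
qed

lemma eventually_power_ge:
  fixes x :: real
  assumes "x > 1"
  shows "eventually (\<lambda>k. C \<le> x ^ k) sequentially"
proof -
  have "filterlim (\<lambda>k. x ^ k) at_infinity sequentially"
    using assms by (intro filterlim_realpow_sequentially_gt1) simp
  hence "filterlim (\<lambda>k. norm (x ^ k)) at_top sequentially"
    by (rule filterlim_at_infinity_imp_norm_at_top)
  thus ?thesis
    using assms by (simp add: filterlim_at_top abs_of_pos)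
qed

lemma eventually_abs_power_minus_one_ge:
  fixes x :: real
  assumes "x \<ge> 0" "x \<noteq> 1"
  shows "eventually (\<lambda>k. 1 / 2 \<le> \<bar>x ^ k - 1\<bar>) sequentially"
proof (cases "x < 1")
  case True
  have "(\<lambda>k. x ^ k) \<longlonglongrightarrow> 0"
    using assms True by (intro LIMSEQ_power_zero) simp
  hence "eventually (\<lambda>k. x ^ k < 1 / 2) sequentially"
    by (rule order_tendstoD) simp
  thus ?thesis
    by eventually_elim simp
next
  case False
  hence "eventually (\<lambda>k. 2 \<le> x ^ k) sequentially"
    using assms by (intro eventually_power_ge) simp
  thus ?thesis
    by eventually_elim simp
qed

text \<open>One factor grows without bound while all others are eventually at least \<open>1/2\<close>.\<close>

lemma eventually_prod_abs_power_minus_one_ge: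
  fixes r :: "'s \<Rightarrow> real"
  assumes "finite E" "\<And>s. s \<in> E \<Longrightarrow> r s \<ge> 0 \<and> r s \<noteq> 1" "s0 \<in> E" "r s0 > 1"
  shows "eventually (\<lambda>k. 2 \<le> (\<Prod>s\<in>E. \<bar>r s ^ k - 1\<bar>)) sequentially"
proof -
  have "eventually (\<lambda>k. \<forall>s\<in>E. 1 / 2 \<le> \<bar>r s ^ k - 1\<bar>) sequentially"
    using assms(1,2) by (intro eventually_ball_finite ballI eventually_abs_power_minus_one_ge) auto
  moreover have "eventually (\<lambda>k. 2 ^ card E + 1 \<le> r s0 ^ k) sequentially"
    using assms(4) by (rule eventually_power_ge)
  ultimately show ?thesis
  proof eventually_elim
    case (elim k)
    obtain n where n: "card (E - {s0}) = n" "card E = Suc n"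
      using assms(1,3) by (metis card_Suc_Diff1)
    have "2 = (2 :: real) ^ card E * (1 / 2) ^ card (E - {s0})"
      by (simp add: n power_one_over)
    also have "\<dots> \<le> \<bar>r s0 ^ k - 1\<bar> * (\<Prod>s\<in>E - {s0}. \<bar>r s ^ k - 1\<bar>)"
    proof (rule mult_mono)
      show "(1 / 2) ^ card (E - {s0}) \<le> (\<Prod>s\<in>E - {s0}. \<bar>r s ^ k - 1\<bar>)"
        using elim(1) by (subst prod_constant[symmetric]) (intro prod_mono; auto)
    qed (use elim(2) in auto)
    also have "\<dots> = (\<Prod>s\<in>E. \<bar>r s ^ k - 1\<bar>)"
      using assms(1,3) by (simp add: prod.remove)
    finally show ?case .
  qed
qed


lemma exp_le_power_of_two_le:
  fixes P :: real
  assumes "2 \<le> P" "real n / 2 \<le> real t"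
  shows "exp (ln 2 / 2 * real n) \<le> P ^ t"
proof -
  have "exp (ln 2 / 2 * real n) = 2 powr (real n / 2)"
    by (simp add: powr_def)
  also have "\<dots> \<le> 2 powr real t"
    using assms(2) by (intro powr_mono) auto
  also have "\<dots> = 2 ^ t"
    by (simp add: powr_realpow)
  also have "\<dots> \<le> P ^ t"
    using assms(1) by (intro power_mono) auto
  finally show ?thesis .
qed

lemma galois_number_field_imp_finite_extension:
  assumes "galois_number_field K m"
  obtains B where "finite_extension K B"
  using assms by (force simp: galois_number_field_def degree_over_Q_def finite_extension_def)

context finite_extension
begin

lemma embedding_outside_unit_circle_exists:
  assumes "u \<in> K" "algebraic_int u" "u \<noteq> 0" "\<forall>z\<in>conjugates u. norm z \<noteq> 1"
  shows "\<exists>\<sigma>\<in>embeddings K. norm (\<sigma> u) > 1"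
proof -
  obtain q where "rat_minpoly u q"
    using rat_minpoly_exists assms(2) by blast
  then interpret minpoly_in_extension K B u q
    using assms(1) by (simp add: minpoly_in_extension_def minpoly_in_extension_axioms_def finite_extension_axioms)
  obtain z :: complex where "poly (map_poly of_rat q) z = 0" "norm z > 1"
    using root_outside_unit_disc assms(2-4) by blast
  thus ?thesis
    using embedding_for_root by blast
qed

lemma power_prod_ge_two_exists:
  assumes "u \<in> K" "algebraic_int u" "u \<noteq> 0" "\<forall>z\<in>conjugates u. norm z \<noteq> 1"
  shows "\<exists>k\<ge>1. 2 \<le> (\<Prod>\<sigma>\<in>embeddings K. \<bar>norm (\<sigma> u) ^ k - 1\<bar>)"
proof -
  obtain \<sigma>0 where "\<sigma>0 \<in> embeddings K" "norm (\<sigma>0 u) > 1"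
    using embedding_outside_unit_circle_exists assms by blast
  moreover have "norm (\<sigma> u) \<noteq> 1" if "\<sigma> \<in> embeddings K" for \<sigma>
    using assms(4) embedding_in_conjugates[OF subfield that assms(1)] by blast
  ultimately have "eventually (\<lambda>k. 2 \<le> (\<Prod>\<sigma>\<in>embeddings K. \<bar>norm (\<sigma> u) ^ k - 1\<bar>)) sequentially"
    using finite_embeddings by (intro eventually_prod_abs_power_minus_one_ge) auto
  hence "eventually (\<lambda>k. k \<ge> 1 \<and> 2 \<le> (\<Prod>\<sigma>\<in>embeddings K. \<bar>norm (\<sigma> u) ^ k - 1\<bar>)) sequentially"
    using eventually_ge_at_top by (rule eventually_conj[rotated])
  thus ?thesis
    by (auto simp: eventually_sequentially)
qed

end

theorem lemma2p1:
  fixes K :: "complex set" and m :: nat and u :: complex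
  assumes "galois_number_field K m"
    and "u \<in> unit_group K \<inter> S_set"
  shows "\<exists>k::nat. k \<ge> 1 \<and> (\<exists>c::real. c > 0 \<and>
           (\<forall>n::nat. n > 0 \<longrightarrow> real (totient n) \<ge> real n / 2 \<longrightarrow>
              cmod (nf_norm K (poly (cyclotomic n) (u ^ k))) \<ge> exp (c * real n)))"
proof -
  obtain B where "finite_extension K B"
    using assms(1) by (rule galois_number_field_imp_finite_extension)
  then interpret finite_extension K B .
  have u: "u \<in> K" "algebraic_int u" "u \<noteq> 0" "\<forall>z\<in>conjugates u. norm z \<noteq> 1"
    using assms(2) by (auto simp: unit_group_def ring_of_integers_def S_set_def)
  then obtain k where k: "k \<ge> 1" "2 \<le> (\<Prod>\<sigma>\<in>embeddings K. \<bar>norm (\<sigma> u) ^ k - 1\<bar>)"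
    using power_prod_ge_two_exists by blast
  have "exp (ln 2 / 2 * real n) \<le> norm (nf_norm K (poly (cyclotomic n) (u ^ k)))"
    if "real n / 2 \<le> real (totient n)" for n
  proof -
    have "(\<Prod>\<sigma>\<in>embeddings K. \<bar>norm (\<sigma> (u ^ k)) - 1\<bar>) = (\<Prod>\<sigma>\<in>embeddings K. \<bar>norm (\<sigma> u) ^ k - 1\<bar>)"
      using u(1) by (intro prod.cong) (simp_all add: embedding_power[OF subfield] norm_power)
    thus ?thesis
      using exp_le_power_of_two_le[OF k(2) that] norm_nf_norm_poly_cyclotomic_ge[OF subfield, of "u ^ k" n] u(1)
      by simp
  qed
  moreover have "ln 2 / 2 > (0 :: real)"
    by simp
  ultimately show ?thesis
    using k(1) by blast
qed

end
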